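(* Let $A, A_1,\dots,A_k$ ($k\ge2$) be nonempty subsets of $X$ (or of $X^*$). Then \[ \Big[\overline{\operatorname{co}}\big(A\cup A_1\cup\cdots\cup A_k\big)\Big]_\infty=\Big[\overline{\operatorname{co}}\big(A\cup(A_1+\cdots+A_k)\big)\Big]_\infty . \]
   Context: $X$ is a real separated locally convex space with dual $X^*$ carrying the weak$^*$ topology (closures in $X^*$ are weak$^*$-closures). $\overline{\operatorname{co}}$ denotes the closed convex hull, and $A_1+\cdots+A_k$ the Minkowski sum. For a nonempty closed convex set $C$, its recession cone is $C_\infty:=\{y:\ z+\lambda y\in C\text{ for some } z\in C \text{ and all }\lambda\ge 0\}$. *)

theory Defs
  imports "HOL-Analysis.Analysis"
begin

definition lc_tvs :: "'a::{real_vector,t2_space} itself \<Rightarrow> bool" where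
  "lc_tvs _ \<longleftrightarrow>
     continuous_on UNIV (\<lambda>p::'a \<times> 'a. fst p + snd p) \<and>
     continuous_on UNIV (\<lambda>p::real \<times> 'a. fst p *\<^sub>R snd p) \<and>
     (\<forall>U (x::'a). open U \<and> x \<in> U \<longrightarrow> (\<exists>V. open V \<and> convex V \<and> x \<in> V \<and> V \<subseteq> U))"

definition clconv :: "'a::{real_vector,topological_space} set \<Rightarrow> 'a set" where
  "clconv S = (\<lambda>C. convex C \<and> closed C) hull S"

definition rec_cone :: "'a::real_vector set \<Rightarrow> 'a set" where
  "rec_cone C = {y. \<exists>z\<in>C. \<forall>t::real. t \<ge> 0 \<longrightarrow> z + t *\<^sub>R y \<in> C}"

definition msum :: "(nat \<Rightarrow> 'a::real_vector set) \<Rightarrow> nat \<Rightarrow> 'a set" where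
  "msum A k = {(\<Sum>i\<in>{1..k}. x i) | x. \<forall>i\<in>{1..k}. x i \<in> A i}"

end

(* Fix a in A and a_i in A_i with sum c. Every x in A_j is (x + c - a_j) + (a_j - c) with
   x + c - a_j in A_1 + ... + A_k, so the first closed convex hull lies in the closure of the
   second plus the polytope conv {0, a_j - c}; conversely, 1/k times the second hull lies in the
   closure of the first plus conv {0, -(1 - 1/k) a}. Adding a polytope to a closed convex set C
   and closing does not enlarge the recession cone, and recession cones are invariant under
   positive scaling. *)
theory Submission
  imports Defs
begin

lemma lc_tvs_continuous_on_add:
  fixes f g :: "'b::topological_space \<Rightarrow> 'a::{real_vector,t2_space}"
  assumes "lc_tvs TYPE('a)" and "continuous_on S f" and "continuous_on S g"
  shows "continuous_on S (\<lambda>x. f x + g x)"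
proof -
  have "continuous_on UNIV (\<lambda>p::'a \<times> 'a. fst p + snd p)"
    using assms(1) unfolding lc_tvs_def by blast
  from continuous_on_compose2[OF this continuous_on_Pair[OF assms(2,3)]]
  show ?thesis by simp
qed

lemma lc_tvs_continuous_on_scaleR:
  fixes f :: "'b::topological_space \<Rightarrow> real" and g :: "'b \<Rightarrow> 'a::{real_vector,t2_space}"
  assumes "lc_tvs TYPE('a)" and "continuous_on S f" and "continuous_on S g"
  shows "continuous_on S (\<lambda>x. f x *\<^sub>R g x)"
proof -
  have "continuous_on UNIV (\<lambda>p::real \<times> 'a. fst p *\<^sub>R snd p)"
    using assms(1) unfolding lc_tvs_def by blast
  from continuous_on_compose2[OF this continuous_on_Pair[OF assms(2,3)]]
  show ?thesis by simp
qed

lemmas lc_tvs_continuous_intros =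
  lc_tvs_continuous_on_add lc_tvs_continuous_on_scaleR continuous_on_const continuous_on_id

lemma lc_tvs_open_affine_vimage:
  fixes W :: "'a::{real_vector,t2_space} set"
  assumes "lc_tvs TYPE('a)" and "open W"
  shows "open ((\<lambda>x. a + c *\<^sub>R x) -` W)" and "open ((\<lambda>\<mu>::real. a + \<mu> *\<^sub>R b) -` W)"
  using assms by (auto intro!: open_vimage lc_tvs_continuous_intros)

lemma lc_tvs_convex_closure:
  fixes S :: "'a::{real_vector,t2_space} set"
  assumes lc: "lc_tvs TYPE('a)" and "convex S"
  shows "convex (closure S)"
proof (rule convexI)
  fix x y and u v :: real
  assume x: "x \<in> closure S" and y: "y \<in> closure S" and uv: "0 \<le> u" "0 \<le> v" "u + v = 1"
  define F where "F = (\<lambda>p::'a \<times> 'a. u *\<^sub>R fst p + v *\<^sub>R snd p)"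
  have "open (F -` U)" if "open U" for U
    unfolding F_def using lc that
    by (intro open_vimage) (auto intro!: lc_tvs_continuous_intros continuous_on_fst continuous_on_snd)
  show "u *\<^sub>R x + v *\<^sub>R y \<in> closure S"
    unfolding closure_iff_nhds_not_empty
  proof (intro allI impI)
    fix T U assume U: "U \<subseteq> T" "open U" "u *\<^sub>R x + v *\<^sub>R y \<in> U"
    then have "open (F -` U)" "(x, y) \<in> F -` U"
      using \<open>\<And>U. open U \<Longrightarrow> open (F -` U)\<close> by (auto simp: F_def)
    then obtain P Q where PQ: "open P" "open Q" "x \<in> P" "y \<in> Q" "P \<times> Q \<subseteq> F -` U"
      by (metis mem_Sigma_iff open_prod_elim)
    obtain a b where "a \<in> S" "a \<in> P" "b \<in> S" "b \<in> Q"
      using x y PQ unfolding closure_iff_nhds_not_empty by (metis disjoint_iff_not_equal order_refl)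
    then have "F (a, b) \<in> U \<inter> S"
      using PQ(5) \<open>convex S\<close> uv by (auto simp: F_def convex_def)
    then show "S \<inter> T \<noteq> {}" using U by blast
  qed
qed

lemma clconv_closed: "closed (clconv S)"
  and clconv_convex: "convex (clconv S)"
  unfolding clconv_def using hull_in[of "\<lambda>C. convex C \<and> closed C" S]
  by (auto intro: convex_Inter closed_Inter)

lemma clconv_superset: "S \<subseteq> clconv S"
  unfolding clconv_def by (rule hull_subset)

lemma clconv_least: "S \<subseteq> T \<Longrightarrow> convex T \<Longrightarrow> closed T \<Longrightarrow> clconv S \<subseteq> T"
  unfolding clconv_def by (rule hull_minimal) auto

lemma scaleR_image_clconv_subset:
  fixes S :: "'a::{real_vector,t2_space} set"
  assumes "lc_tvs TYPE('a)"
  shows "(\<lambda>x. c *\<^sub>R x) ` clconv S \<subseteq> clconv ((\<lambda>x. c *\<^sub>R x) ` S)"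
proof -
  have "clconv S \<subseteq> (\<lambda>x. c *\<^sub>R x) -` clconv ((\<lambda>x. c *\<^sub>R x) ` S)"
  proof (rule clconv_least)
    show "convex ((\<lambda>x. c *\<^sub>R x) -` clconv ((\<lambda>x. c *\<^sub>R x) ` S))"
      by (intro convex_linear_vimage linear_scaleR clconv_convex)
    show "closed ((\<lambda>x. c *\<^sub>R x) -` clconv ((\<lambda>x. c *\<^sub>R x) ` S))"
      using assms clconv_closed by (auto intro!: closed_vimage lc_tvs_continuous_intros)
  qed (use clconv_superset in blast)
  then show ?thesis by blast
qed

lemma rec_cone_mono: "C \<subseteq> D \<Longrightarrow> rec_cone C \<subseteq> rec_cone D"
  unfolding rec_cone_def by blast

lemma rec_cone_scaleR:
  assumes "y \<in> rec_cone C" and "c > 0"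
  shows "c *\<^sub>R y \<in> rec_cone C"
proof -
  obtain z where "z \<in> C" and ray: "\<forall>t\<ge>0. z + t *\<^sub>R y \<in> C"
    using assms(1) unfolding rec_cone_def by blast
  have "z + t *\<^sub>R (c *\<^sub>R y) \<in> C" if "t \<ge> 0" for t
    using ray[rule_format, of "t * c"] that assms(2) by simp
  then show ?thesis unfolding rec_cone_def using \<open>z \<in> C\<close> by blast
qed

lemma rec_cone_image_scaleR:
  assumes "y \<in> rec_cone C"
  shows "c *\<^sub>R y \<in> rec_cone ((\<lambda>x. c *\<^sub>R x) ` C)"
proof -
  obtain z where "z \<in> C" and ray: "\<forall>t\<ge>0. z + t *\<^sub>R y \<in> C"
    using assms unfolding rec_cone_def by blast
  have "c *\<^sub>R z + t *\<^sub>R (c *\<^sub>R y) = c *\<^sub>R (z + t *\<^sub>R y)" for t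
    by (simp add: algebra_simps)
  then have "\<forall>t\<ge>0. c *\<^sub>R z + t *\<^sub>R (c *\<^sub>R y) \<in> (\<lambda>x. c *\<^sub>R x) ` C"
    using ray by auto
  then show ?thesis
    unfolding rec_cone_def using \<open>z \<in> C\<close> by blast
qed

lemma lc_tvs_small_steps_in_open:
  fixes W :: "'a::{real_vector,t2_space} set"
  assumes "lc_tvs TYPE('a)" and "open W" and "p \<in> W" and "finite V"
  obtains \<mu> where "0 < \<mu>" and "\<mu> \<le> 1" and "\<forall>v\<in>V. p + \<mu> *\<^sub>R v \<in> W"
proof -
  define M where "M = (\<Inter>v\<in>V. (\<lambda>\<mu>::real. p + \<mu> *\<^sub>R v) -` W)"
  have "open M" "0 \<in> M"
    unfolding M_def using assms by (auto intro: lc_tvs_open_affine_vimage)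
  then obtain e where "e > 0" "ball 0 e \<subseteq> M"
    using open_contains_ball by blast
  then have "min (e/2) 1 \<in> M" by (auto simp: subset_eq)
  then show thesis
    using that[of "min (e/2) 1"] \<open>e > 0\<close> by (auto simp: M_def)
qed

lemma convex_hull_affine_vimage_mem:
  assumes "convex W" and "\<And>v. v \<in> V \<Longrightarrow> x + c *\<^sub>R v \<in> W" and "v' \<in> convex hull V"
  shows "x + c *\<^sub>R v' \<in> W"
proof -
  have "convex {v. x + c *\<^sub>R v \<in> W}"
  proof (rule convexI)
    fix u v and a b :: real
    assume "u \<in> {v. x + c *\<^sub>R v \<in> W}" "v \<in> {v. x + c *\<^sub>R v \<in> W}" "0 \<le> a" "0 \<le> b" "a + b = 1"
    then have "a *\<^sub>R (x + c *\<^sub>R u) + b *\<^sub>R (x + c *\<^sub>R v) \<in> W"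
      using \<open>convex W\<close> by (simp add: convexD)
    moreover have "a *\<^sub>R (x + c *\<^sub>R u) + b *\<^sub>R (x + c *\<^sub>R v) = x + c *\<^sub>R (a *\<^sub>R u + b *\<^sub>R v)"
      using \<open>a + b = 1\<close> by (simp add: algebra_simps flip: scaleR_add_left)
    ultimately show "a *\<^sub>R u + b *\<^sub>R v \<in> {v. x + c *\<^sub>R v \<in> W}" by simp
  qed
  then have "convex hull V \<subseteq> {v. x + c *\<^sub>R v \<in> W}"
    using assms(2) by (intro hull_minimal) auto
  then show ?thesis using assms(3) by blast
qed

(* Shrinking the far ray point z + (s/mu) y towards d by the factor mu lands, up to the
   small perturbation mu (conv V), in a convex neighbourhood W of d + s y missing C; approximating
   that ray point by c + v' in C + conv V then puts (1 - mu) d + mu c, a point of C, into W. *)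
lemma closure_plus_convex_hull_ray_mem:
  fixes C :: "'a::{real_vector,t2_space} set"
  assumes lc: "lc_tvs TYPE('a)" and "closed C" and "convex C" and "d \<in> C" and "finite V"
    and ray: "\<forall>t\<ge>0. z + t *\<^sub>R y \<in> closure (C + convex hull V)" and "s > 0"
  shows "d + s *\<^sub>R y \<in> C"
proof (rule ccontr)
  define p where "p = d + s *\<^sub>R y"
  assume "d + s *\<^sub>R y \<notin> C"
  then obtain W where W: "open W" "convex W" "p \<in> W" "W \<subseteq> - C"
    using lc \<open>closed C\<close> unfolding lc_tvs_def p_def by (metis ComplI open_Compl)
  obtain \<mu> where \<mu>: "0 < \<mu>" "\<mu> \<le> 1" "\<forall>v\<in>V. p + \<mu> *\<^sub>R (z - d - v) \<in> W"
    using lc_tvs_small_steps_in_open[OF lc W(1,3), of "(\<lambda>v. z - d - v) ` V"] \<open>finite V\<close> by auto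
  define U where "U = (\<Inter>v\<in>V. (\<lambda>q. ((1 - \<mu>) *\<^sub>R d - \<mu> *\<^sub>R v) + \<mu> *\<^sub>R q) -` W)"
  have "open U"
    unfolding U_def using lc W(1) \<open>finite V\<close> by (auto intro: lc_tvs_open_affine_vimage)
  have "z + (s / \<mu>) *\<^sub>R y \<in> U"
  proof -
    have "((1 - \<mu>) *\<^sub>R d - \<mu> *\<^sub>R v) + \<mu> *\<^sub>R (z + (s / \<mu>) *\<^sub>R y) = p + \<mu> *\<^sub>R (z - d - v)" for v
      using \<mu>(1) by (simp add: p_def algebra_simps)
    then show ?thesis using \<mu>(3) by (simp add: U_def)
  qed
  moreover have "z + (s / \<mu>) *\<^sub>R y \<in> closure (C + convex hull V)"
    using ray \<open>s > 0\<close> \<mu>(1) by simp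
  ultimately obtain c v' where "c \<in> C" "v' \<in> convex hull V" "c + v' \<in> U"
    using \<open>open U\<close> unfolding closure_iff_nhds_not_empty by (blast elim: set_plus_elim)
  define x where "x = (1 - \<mu>) *\<^sub>R d + \<mu> *\<^sub>R c + \<mu> *\<^sub>R v'"
  have "x + (- \<mu>) *\<^sub>R v = ((1 - \<mu>) *\<^sub>R d - \<mu> *\<^sub>R v) + \<mu> *\<^sub>R (c + v')" for v
    by (simp add: x_def algebra_simps)
  then have "x + (- \<mu>) *\<^sub>R v \<in> W" if "v \<in> V" for v
    using \<open>c + v' \<in> U\<close> that unfolding U_def by (metis INT_E vimage_eq)
  then have "x + (- \<mu>) *\<^sub>R v' \<in> W"
    using convex_hull_affine_vimage_mem[OF W(2)] \<open>v' \<in> convex hull V\<close> by blast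
  moreover have "x + (- \<mu>) *\<^sub>R v' \<in> C"
    using \<open>convex C\<close> \<open>d \<in> C\<close> \<open>c \<in> C\<close> \<mu>(1,2) by (simp add: x_def convexD)
  ultimately show False using W(4) by blast
qed

lemma rec_cone_closure_plus_convex_hull:
  fixes C :: "'a::{real_vector,t2_space} set"
  assumes "lc_tvs TYPE('a)" and "closed C" and "convex C" and "C \<noteq> {}" and "finite V"
  shows "rec_cone (closure (C + convex hull V)) \<subseteq> rec_cone C"
proof
  fix y assume "y \<in> rec_cone (closure (C + convex hull V))"
  then obtain z where "\<forall>t\<ge>0. z + t *\<^sub>R y \<in> closure (C + convex hull V)"
    unfolding rec_cone_def by blast
  moreover obtain d where "d \<in> C" using \<open>C \<noteq> {}\<close> by blast
  ultimately have "d + s *\<^sub>R y \<in> C" if "s \<ge> 0" for s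
    using closure_plus_convex_hull_ray_mem[OF assms(1-3) \<open>d \<in> C\<close> assms(5)] that
    by (cases "s = 0") auto
  then show "y \<in> rec_cone C"
    unfolding rec_cone_def using \<open>d \<in> C\<close> by blast
qed

lemma rec_cone_clconv_subset_plus_finite:
  fixes S T :: "'a::{real_vector,t2_space} set"
  assumes lc: "lc_tvs TYPE('a)" and "S \<subseteq> clconv T + V" and "finite V" and "T \<noteq> {}"
  shows "rec_cone (clconv S) \<subseteq> rec_cone (clconv T)"
proof -
  have "clconv T + V \<subseteq> clconv T + convex hull V"
    by (intro set_plus_mono2 order_refl hull_subset)
  then have "clconv S \<subseteq> closure (clconv T + convex hull V)"
    using assms(2) closure_subset
    by (intro clconv_least lc_tvs_convex_closure[OF lc] convex_set_plus clconv_convex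
        convex_convex_hull) auto
  moreover have "clconv T \<noteq> {}" using \<open>T \<noteq> {}\<close> clconv_superset by blast
  ultimately show ?thesis
    using rec_cone_mono rec_cone_closure_plus_convex_hull[OF lc clconv_closed clconv_convex]
      \<open>finite V\<close> by blast
qed

lemma msum_replace_summand:
  assumes "\<forall>i\<in>{1..k}. a i \<in> As i" and "j \<in> {1..k}" and "x \<in> As j"
  shows "x + ((\<Sum>i\<in>{1..k}. a i) - a j) \<in> msum As k"
proof -
  have remove_j: "sum f {1..k} = f j + sum f ({1..k} - {j})" for f :: "nat \<Rightarrow> 'a"
    using sum.remove[OF finite_atLeastAtMost \<open>j \<in> {1..k}\<close>] .
  have "(\<Sum>i\<in>{1..k} - {j}. (a(j := x)) i) = (\<Sum>i\<in>{1..k} - {j}. a i)"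
    by (intro sum.cong) auto
  then have "(\<Sum>i\<in>{1..k}. (a(j := x)) i) = x + ((\<Sum>i\<in>{1..k}. a i) - a j)"
    unfolding remove_j[of "a(j := x)"] remove_j[of a] by simp
  then show ?thesis
    unfolding msum_def using assms by (intro CollectI exI[of _ "a(j := x)"]) auto
qed

lemma union_subset_clconv_msum_plus:
  fixes a :: "nat \<Rightarrow> 'a::{real_vector,topological_space}"
  assumes "\<forall>i\<in>{1..k}. a i \<in> As i"
  shows "A \<union> (\<Union>i\<in>{1..k}. As i)
    \<subseteq> clconv (A \<union> msum As k) + insert 0 ((\<lambda>j. a j - (\<Sum>i\<in>{1..k}. a i)) ` {1..k})"
proof
  fix x assume "x \<in> A \<union> (\<Union>i\<in>{1..k}. As i)"
  then consider "x \<in> A" | j where "j \<in> {1..k}" "x \<in> As j" by blast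
  then show "x \<in> clconv (A \<union> msum As k) + insert 0 ((\<lambda>j. a j - (\<Sum>i\<in>{1..k}. a i)) ` {1..k})"
  proof cases
    case 1
    then show ?thesis using clconv_superset by (metis UnI1 add.right_neutral insertI1 set_plus_intro subsetD)
  next
    case 2
    then have "x + ((\<Sum>i\<in>{1..k}. a i) - a j) \<in> clconv (A \<union> msum As k)"
      using msum_replace_summand[OF assms] clconv_superset by blast
    moreover have "x = (x + ((\<Sum>i\<in>{1..k}. a i) - a j)) + (a j - (\<Sum>i\<in>{1..k}. a i))"
      by simp
    ultimately show ?thesis using \<open>j \<in> {1..k}\<close> by (metis image_eqI insertI2 set_plus_intro)
  qed
qed

lemma scaleR_msum_in_convex_hull:
  assumes "k \<ge> 1" and "x \<in> msum As k"
  shows "(1 / real k) *\<^sub>R x \<in> convex hull (\<Union>i\<in>{1..k}. As i)"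
proof -
  obtain xs where x: "x = (\<Sum>i\<in>{1..k}. xs i)" and xs: "\<forall>i\<in>{1..k}. xs i \<in> As i"
    using assms(2) unfolding msum_def by blast
  have "xs i \<in> convex hull (\<Union>i\<in>{1..k}. As i)" if "i \<in> {1..k}" for i
    using xs that by (blast intro: hull_inc)
  then have "(\<Sum>i\<in>{1..k}. (1 / real k) *\<^sub>R xs i) \<in> convex hull (\<Union>i\<in>{1..k}. As i)"
    using \<open>k \<ge> 1\<close> by (intro convex_sum convex_convex_hull) auto
  then show ?thesis by (simp add: x scaleR_sum_right)
qed

lemma scaleR_union_msum_subset_clconv_plus:
  fixes A :: "'a::{real_vector,topological_space} set"
  assumes "k \<ge> 1" and "a \<in> A"
  shows "(\<lambda>x. (1 / real k) *\<^sub>R x) ` (A \<union> msum As k)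
    \<subseteq> clconv (A \<union> (\<Union>i\<in>{1..k}. As i)) + {0, - ((1 - 1 / real k) *\<^sub>R a)}"
    (is "_ \<subseteq> ?C + ?V")
proof -
  have "A \<subseteq> ?C" and "(\<Union>i\<in>{1..k}. As i) \<subseteq> ?C"
    using clconv_superset[of "A \<union> (\<Union>i\<in>{1..k}. As i)"] by auto
  have "(1 / real k) *\<^sub>R x \<in> ?C + ?V" if "x \<in> A" for x
  proof -
    have "(1 / real k) *\<^sub>R x + (1 - 1 / real k) *\<^sub>R a \<in> ?C"
    proof (rule convexD[OF clconv_convex])
      show "x \<in> ?C" "a \<in> ?C" using that \<open>a \<in> A\<close> \<open>A \<subseteq> ?C\<close> by blast+
      show "0 \<le> 1 / real k" "0 \<le> 1 - 1 / real k" using \<open>k \<ge> 1\<close> by simp_all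
    qed simp
    then have "((1 / real k) *\<^sub>R x + (1 - 1 / real k) *\<^sub>R a) + - ((1 - 1 / real k) *\<^sub>R a) \<in> ?C + ?V"
      by (rule set_plus_intro) simp
    then show ?thesis by simp
  qed
  moreover have "(1 / real k) *\<^sub>R x \<in> ?C + ?V" if "x \<in> msum As k" for x
  proof -
    have "convex hull (\<Union>i\<in>{1..k}. As i) \<subseteq> ?C"
      using \<open>(\<Union>i\<in>{1..k}. As i) \<subseteq> ?C\<close> by (rule hull_minimal) (rule clconv_convex)
    then have "(1 / real k) *\<^sub>R x \<in> ?C"
      using scaleR_msum_in_convex_hull[OF \<open>k \<ge> 1\<close> that] by blast
    then have "(1 / real k) *\<^sub>R x + 0 \<in> ?C + ?V"
      by (rule set_plus_intro) simp
    then show ?thesis by simp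
  qed
  ultimately show ?thesis by blast
qed

theorem lemma2:
  fixes A :: "'a::{real_vector,t2_space} set" and As :: "nat \<Rightarrow> 'a set" and k :: nat
  assumes "lc_tvs TYPE('a)"
    and "k \<ge> 2" and "A \<noteq> {}" and "\<forall>i\<in>{1..k}. As i \<noteq> {}"
  shows "rec_cone (clconv (A \<union> (\<Union>i\<in>{1..k}. As i))) = rec_cone (clconv (A \<union> msum As k))"
proof
  note lc = \<open>lc_tvs TYPE('a)\<close>
  obtain a where "a \<in> A" using \<open>A \<noteq> {}\<close> by blast
  define as where "as i = (SOME x. x \<in> As i)" for i
  have "\<forall>i\<in>{1..k}. as i \<in> As i"
    using \<open>\<forall>i\<in>{1..k}. As i \<noteq> {}\<close> unfolding as_def by (simp add: some_in_eq)
  then have "A \<union> (\<Union>i\<in>{1..k}. As i)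
      \<subseteq> clconv (A \<union> msum As k) + insert 0 ((\<lambda>j. as j - (\<Sum>i\<in>{1..k}. as i)) ` {1..k})"
    by (rule union_subset_clconv_msum_plus)
  then show "rec_cone (clconv (A \<union> (\<Union>i\<in>{1..k}. As i))) \<subseteq> rec_cone (clconv (A \<union> msum As k))"
    by (rule rec_cone_clconv_subset_plus_finite[OF lc]) (use \<open>a \<in> A\<close> in auto)
  show "rec_cone (clconv (A \<union> msum As k)) \<subseteq> rec_cone (clconv (A \<union> (\<Union>i\<in>{1..k}. As i)))"
  proof
    fix y assume "y \<in> rec_cone (clconv (A \<union> msum As k))"
    have "k \<ge> 1" using \<open>k \<ge> 2\<close> by simp
    let ?shrink = "\<lambda>x. (1 / real k) *\<^sub>R x"
    have "(1 / real k) *\<^sub>R y \<in> rec_cone (?shrink ` clconv (A \<union> msum As k))"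
      by (rule rec_cone_image_scaleR) fact
    also have "\<dots> \<subseteq> rec_cone (clconv (?shrink ` (A \<union> msum As k)))"
      by (rule rec_cone_mono[OF scaleR_image_clconv_subset[OF lc]])
    also have "\<dots> \<subseteq> rec_cone (clconv (A \<union> (\<Union>i\<in>{1..k}. As i)))"
      by (rule rec_cone_clconv_subset_plus_finite[OF lc
            scaleR_union_msum_subset_clconv_plus[OF \<open>k \<ge> 1\<close> \<open>a \<in> A\<close>]]) (use \<open>a \<in> A\<close> in auto)
    finally have "real k *\<^sub>R ((1 / real k) *\<^sub>R y) \<in> rec_cone (clconv (A \<union> (\<Union>i\<in>{1..k}. As i)))"
      by (rule rec_cone_scaleR) (use \<open>k \<ge> 1\<close> in simp)
    then show "y \<in> rec_cone (clconv (A \<union> (\<Union>i\<in>{1..k}. As i)))"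
      using \<open>k \<ge> 1\<close> by simp
  qed
qed

end
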